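(* For each $n\ge 3$, let $\mathcal D_n$ be the algebra with carrier $\{0,1,\dots,n\}$, constant $0$, and operation defined by: $x\cdot y=\max\{x-y,0\}$ for $x,y\in\{0,\dots,n-1\}$; $n\cdot 0=n$; $n\cdot k=n-k-1$ for $k\in\{1,\dots,n-2\}$; $n\cdot(n-1)=1$; and $k\cdot n=0$ for all $k\in\{0,1,\dots,n\}$. Then $\mathcal D_n$ is a BCK-algebra, and it is not commutative (indeed $(n-1)\wedge n=n-2\neq n-1=n\wedge(n-1)$).
   Context: A BCK-algebra is a set $A$ with a binary operation $\cdot$ and a constant $0$ such that for all $x,y,z\in A$: (BCK1) $((x\cdot y)\cdot(x\cdot z))\cdot(z\cdot y)=0$; (BCK2) $(x\cdot(x\cdot y))\cdot y=0$; (BCK3) $x\cdot x=0$; (BCK4) $0\cdot x=0$; (BCK5) $x\cdot y=0$ and $y\cdot x=0$ imply $x=y$. Define $x\wedge y:=y\cdot(y\cdot x)$; the algebra is commutative if $x\wedge y=y\wedge x$ for all $x,y$. *)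

theory Defs
  imports Main
begin

definition bck_algebra :: "'a set \<Rightarrow> ('a \<Rightarrow> 'a \<Rightarrow> 'a) \<Rightarrow> 'a \<Rightarrow> bool" where
  "bck_algebra A m z \<longleftrightarrow>
     z \<in> A \<and> (\<forall>x\<in>A. \<forall>y\<in>A. m x y \<in> A) \<and>
     (\<forall>x\<in>A. \<forall>y\<in>A. \<forall>w\<in>A. m (m (m x y) (m x w)) (m w y) = z) \<and>
     (\<forall>x\<in>A. \<forall>y\<in>A. m (m x (m x y)) y = z) \<and>
     (\<forall>x\<in>A. m x x = z) \<and>
     (\<forall>x\<in>A. m z x = z) \<and>
     (\<forall>x\<in>A. \<forall>y\<in>A. m x y = z \<and> m y x = z \<longrightarrow> x = y)"

definition bck_meet :: "('a \<Rightarrow> 'a \<Rightarrow> 'a) \<Rightarrow> 'a \<Rightarrow> 'a \<Rightarrow> 'a" where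
  "bck_meet m x y = m y (m y x)"

definition bck_commutative :: "'a set \<Rightarrow> ('a \<Rightarrow> 'a \<Rightarrow> 'a) \<Rightarrow> bool" where
  "bck_commutative A m \<longleftrightarrow> (\<forall>x\<in>A. \<forall>y\<in>A. bck_meet m x y = bck_meet m y x)"

text \<open>The operation of D_n on carrier {0..n}. Natural-number subtraction
  truncates, so x - y = max{x-y,0}.\<close>
definition D_op :: "nat \<Rightarrow> nat \<Rightarrow> nat \<Rightarrow> nat" where
  "D_op n x y =
     (if y = n then 0
      else if x = n then (if y = 0 then n else if y = n - 1 then 1 else n - y - 1)
      else x - y)"

end

theory Submission
  imports Defs
begin

text \<open>Away from the top element \<open>n\<close> the operation is truncated subtraction on
  \<open>{0..n-1}\<close>, a BCK-algebra; each axiom then reduces, by splitting every argument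
  into \<open>n\<close>, \<open>n - 1\<close>, \<open>0\<close> or a middle element, to finitely many arithmetic facts.
  The top element breaks commutativity: \<open>n \<cdot> (n \<cdot> (n-1)) = n \<cdot> 1 = n-2\<close>,
  whereas \<open>(n-1) \<cdot> ((n-1) \<cdot> n) = (n-1) \<cdot> 0 = n-1\<close>.\<close>

lemma D_op_right_top [simp]: "D_op n x n = 0"
  by (simp add: D_op_def)

lemma D_op_self [simp]: "D_op n x x = 0"
  by (simp add: D_op_def)

lemma D_op_zero_left [simp]: "D_op n 0 x = 0"
  by (simp add: D_op_def)

lemma D_op_below_top [simp]: "x < n \<Longrightarrow> y < n \<Longrightarrow> D_op n x y = x - y"
  by (simp add: D_op_def)

lemma D_op_top_zero [simp]: "D_op n n 0 = n"
  by (simp add: D_op_def)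

lemma D_op_top_pred [simp]: "0 < n \<Longrightarrow> D_op n n (n - Suc 0) = 1"
  by (auto simp add: D_op_def)

lemma D_op_top_mid [simp]: "0 < y \<Longrightarrow> y < n - Suc 0 \<Longrightarrow> D_op n n y = n - Suc y"
  by (simp add: D_op_def)

lemma D_op_le_top: "x \<le> n \<Longrightarrow> D_op n x y \<le> n"
  by (auto simp add: D_op_def)

lemma le_top_cases:
  fixes y n :: nat
  assumes "y \<le> n"
  obtains "y = n" | "0 < n" "y = n - Suc 0" | "y = 0" | "0 < y" "y < n - Suc 0"
  using assms by linarith

text \<open>In the case splits below the remaining goals after \<open>simp\<close> are those where
  the four cases overlap, i.e. \<open>n \<le> 2\<close>; they are settled by unfolding \<open>D_op\<close>.\<close>

lemma D_op_bck1:
  "x \<le> n \<Longrightarrow> y \<le> n \<Longrightarrow> w \<le> n \<Longrightarrow>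
     D_op n (D_op n (D_op n x y) (D_op n x w)) (D_op n w y) = 0"
  by (cases x n rule: le_top_cases; cases y n rule: le_top_cases; cases w n rule: le_top_cases;
      simp; auto simp: D_op_def)

lemma D_op_bck2: "x \<le> n \<Longrightarrow> y \<le> n \<Longrightarrow> D_op n (D_op n x (D_op n x y)) y = 0"
  by (cases x n rule: le_top_cases; cases y n rule: le_top_cases; simp; auto simp: D_op_def)

lemma D_op_antisym: "x \<le> n \<Longrightarrow> y \<le> n \<Longrightarrow> D_op n x y = 0 \<Longrightarrow> D_op n y x = 0 \<Longrightarrow> x = y"
  by (cases x n rule: le_top_cases; cases y n rule: le_top_cases; simp; auto simp: D_op_def)

lemma bck_algebra_D_op: "bck_algebra {0..n} (D_op n) 0"
  unfolding bck_algebra_def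
  using D_op_le_top D_op_bck1 D_op_bck2 D_op_antisym by auto

lemma bck_meet_D_op_pred_top:
  assumes "n \<ge> 3"
  shows "bck_meet (D_op n) (n - 1) n = n - 2"
  using assms by (simp add: bck_meet_def numeral_2_eq_2)

lemma bck_meet_D_op_top_pred:
  assumes "n \<ge> 1"
  shows "bck_meet (D_op n) n (n - 1) = n - 1"
  using assms by (simp add: bck_meet_def)

lemma not_bck_commutativeI:
  assumes "x \<in> A" "y \<in> A" "bck_meet m x y \<noteq> bck_meet m y x"
  shows "\<not> bck_commutative A m"
  using assms unfolding bck_commutative_def by blast

theorem mainTheorem6:
  fixes n :: nat
  assumes "n \<ge> 3"
  shows "bck_algebra {0..n} (D_op n) 0 \<and> \<not> bck_commutative {0..n} (D_op n) \<and>
         bck_meet (D_op n) (n - 1) n = n - 2 \<and> bck_meet (D_op n) n (n - 1) = n - 1"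
proof -
  have meet1: "bck_meet (D_op n) (n - 1) n = n - 2"
    using assms by (rule bck_meet_D_op_pred_top)
  have meet2: "bck_meet (D_op n) n (n - 1) = n - 1"
    using assms by (intro bck_meet_D_op_top_pred) simp
  have "\<not> bck_commutative {0..n} (D_op n)"
    by (rule not_bck_commutativeI[of "n - 1" _ n]) (use assms meet1 meet2 in auto)
  with bck_algebra_D_op meet1 meet2 show ?thesis by blast
qed

end
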